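(* Let $\alpha\in(0,1)$ be irrational, let $\mathcal{L}_\alpha$ be the Sturmian language generated by $\alpha$, and let $q_n=[(n+1)\alpha]$ for $n\ge0$. Let ${\rm S}:\mathcal{L}_\alpha\to\mathbb{N}$ be a homomorphism, and write ${\rm S}_0={\rm S}(0)$, ${\rm S}_1={\rm S}(1)$. Then $${\rm S}(\mathcal{L}_\alpha)=\{({\rm S}_1-{\rm S}_0)q_n+n{\rm S}_0+{\rm S}_0:\ n\ge0\}\ \cup\ \{({\rm S}_1-{\rm S}_0)q_n+n{\rm S}_0+{\rm S}_1:\ n\ge0\}.$$
   Context: $\mathbb{N}=\{1,2,3,\dots\}$ and $[x]$ denotes the integer part (floor) of $x$. For irrational $\alpha\in(0,1)$, the characteristic word $c_\alpha=(c_\alpha(n))_{n\ge0}$ is the infinite word over $\{0,1\}$ with $c_\alpha(n)=[(n+2)\alpha]-[(n+1)\alpha]$. The Sturmian language $\mathcal{L}_\alpha$ is the set of all nonempty finite words occurring as factors (subwords) of $c_\alpha$ (equivalently, of $0c_\alpha$ or of $1c_\alpha$). A homomorphism ${\rm S}:\mathcal{L}_\alpha\to\mathbb{N}$ is a map with ${\rm S}(w_1\cdots w_n)={\rm S}(w_1)+\cdots+{\rm S}(w_n)$, determined by ${\rm S}(0),{\rm S}(1)\in\mathbb{N}$. *)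

theory Defs
  imports Complex_Main
begin

definition char_word :: "real \<Rightarrow> nat \<Rightarrow> nat" where
  "char_word \<alpha> n = nat (\<lfloor>(real n + 2) * \<alpha>\<rfloor> - \<lfloor>(real n + 1) * \<alpha>\<rfloor>)"

definition sturmian_language :: "real \<Rightarrow> nat list set" where
  "sturmian_language \<alpha> =
     {w. w \<noteq> [] \<and> (\<exists>i. \<forall>j<length w. w ! j = char_word \<alpha> (i + j))}"

definition word_hom :: "nat \<Rightarrow> nat \<Rightarrow> nat list \<Rightarrow> nat" where
  "word_hom s0 s1 w = (\<Sum>x\<leftarrow>w. if x = 0 then s0 else s1)"

end

theory Submission
  imports Defs
begin

text \<open>
  A factor of length \<open>m\<close> starting at position \<open>i\<close> contains
  \<open>\<lfloor>x + m\<alpha>\<rfloor> - \<lfloor>x\<rfloor>\<close> letters 1, where \<open>x = (i + 1)\<alpha>\<close>, by telescoping the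
  definition of the characteristic word. Such a difference is always \<open>\<lfloor>m\<alpha>\<rfloor>\<close> or
  \<open>\<lfloor>m\<alpha>\<rfloor> + 1\<close>, and both values occur: along the progression \<open>x = \<alpha> + k m\<alpha>\<close>
  the differences telescope to \<open>\<lfloor>\<alpha> + k m\<alpha>\<rfloor> - \<lfloor>\<alpha>\<rfloor>\<close>, which stays within 1 of
  \<open>k m\<alpha>\<close>, so they cannot all equal \<open>\<lfloor>m\<alpha>\<rfloor> + 1\<close>, nor, \<open>m\<alpha>\<close> being irrational,
  all equal \<open>\<lfloor>m\<alpha>\<rfloor>\<close>. Since the homomorphism only depends on the length and on the
  number of letters 1, this describes its image.
\<close>

lemma floor_add_diff_cases:
  fixes x y :: real
  shows "\<lfloor>x + y\<rfloor> - \<lfloor>x\<rfloor> = \<lfloor>y\<rfloor> \<or> \<lfloor>x + y\<rfloor> - \<lfloor>x\<rfloor> = \<lfloor>y\<rfloor> + 1"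
  by (simp add: floor_add)

lemma floor_progression_diff_bounds:
  fixes x z :: real
  shows "\<bar>of_int (\<lfloor>x + real k * z\<rfloor> - \<lfloor>x\<rfloor>) - real k * z\<bar> < 1"
  using floor_correct[of x] floor_correct[of "x + real k * z"] by linarith

lemma floor_progression_telescope:
  fixes x z :: real
  shows "\<lfloor>x + real k * z\<rfloor> - \<lfloor>x\<rfloor> = (\<Sum>j<k. \<lfloor>x + real (Suc j) * z\<rfloor> - \<lfloor>x + real j * z\<rfloor>)"
  by (subst sum_lessThan_telescope) simp

lemma floor_progression_step_eq_floor:
  fixes x z :: real
  shows "\<exists>k. \<lfloor>x + real (Suc k) * z\<rfloor> - \<lfloor>x + real k * z\<rfloor> = \<lfloor>z\<rfloor>"
proof (rule ccontr)
  assume "\<not> ?thesis"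
  then have step: "\<lfloor>x + real (Suc j) * z\<rfloor> - \<lfloor>x + real j * z\<rfloor> = \<lfloor>z\<rfloor> + 1" for j
    using floor_add_diff_cases[of "x + real j * z" z] by (auto simp: algebra_simps)
  have "z < of_int \<lfloor>z\<rfloor> + 1"
    by linarith
  then obtain k where k: "1 < real k * (of_int \<lfloor>z\<rfloor> + 1 - z)"
    using reals_Archimedean3[of "of_int \<lfloor>z\<rfloor> + 1 - z"] by auto
  have "\<lfloor>x + real k * z\<rfloor> - \<lfloor>x\<rfloor> = int k * (\<lfloor>z\<rfloor> + 1)"
    unfolding floor_progression_telescope step by simp
  then show False
    using floor_progression_diff_bounds[of x k z] k by (simp add: algebra_simps)
qed

lemma floor_progression_step_eq_floor_plus_one:
  fixes x z :: real
  assumes "z \<notin> \<int>"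
  shows "\<exists>k. \<lfloor>x + real (Suc k) * z\<rfloor> - \<lfloor>x + real k * z\<rfloor> = \<lfloor>z\<rfloor> + 1"
proof (rule ccontr)
  assume "\<not> ?thesis"
  then have step: "\<lfloor>x + real (Suc j) * z\<rfloor> - \<lfloor>x + real j * z\<rfloor> = \<lfloor>z\<rfloor>" for j
    using floor_add_diff_cases[of "x + real j * z" z] by (auto simp: algebra_simps)
  have "of_int \<lfloor>z\<rfloor> < z"
    using assms of_int_floor_le[of z] by (metis Ints_of_int order_less_le)
  then obtain k where k: "1 < real k * (z - of_int \<lfloor>z\<rfloor>)"
    using reals_Archimedean3[of "z - of_int \<lfloor>z\<rfloor>"] by auto
  have "\<lfloor>x + real k * z\<rfloor> - \<lfloor>x\<rfloor> = int k * \<lfloor>z\<rfloor>"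
    unfolding floor_progression_telescope step by simp
  then show False
    using floor_progression_diff_bounds[of x k z] k by (simp add: algebra_simps)
qed

definition factor :: "real \<Rightarrow> nat \<Rightarrow> nat \<Rightarrow> nat list" where
  "factor \<alpha> i m = map (\<lambda>j. char_word \<alpha> (i + j)) [0..<m]"

lemma sturmian_language_eq_factors:
  "sturmian_language \<alpha> = {factor \<alpha> i (Suc n) | i n. True}"
proof (intro set_eqI iffI)
  fix w assume "w \<in> sturmian_language \<alpha>"
  then obtain i where "w \<noteq> []" and "\<forall>j<length w. w ! j = char_word \<alpha> (i + j)"
    unfolding sturmian_language_def by blast
  then have "w = factor \<alpha> i (Suc (length w - 1))"
    unfolding factor_def by (intro nth_equalityI) auto
  then show "w \<in> {factor \<alpha> i (Suc n) | i n. True}"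
    by blast
next
  fix w assume "w \<in> {factor \<alpha> i (Suc n) | i n. True}"
  then show "w \<in> sturmian_language \<alpha>"
    unfolding sturmian_language_def factor_def by (auto simp del: upt_Suc)
qed

lemma char_word_eq_floor_diff:
  assumes "0 \<le> \<alpha>"
  shows "int (char_word \<alpha> i) = \<lfloor>(real i + 2) * \<alpha>\<rfloor> - \<lfloor>(real i + 1) * \<alpha>\<rfloor>"
proof -
  have "(real i + 1) * \<alpha> \<le> (real i + 2) * \<alpha>"
    using assms by (simp add: mult_right_mono)
  then show ?thesis
    unfolding char_word_def by (simp add: floor_mono)
qed

lemma char_word_binary:
  assumes "0 \<le> \<alpha>" and "\<alpha> < 1"
  shows "char_word \<alpha> i \<in> {0, 1}"
proof -
  have "(real i + 2) * \<alpha> = (real i + 1) * \<alpha> + \<alpha>" and "\<lfloor>\<alpha>\<rfloor> = 0"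
    using assms by (simp_all add: algebra_simps floor_eq_iff)
  then have "int (char_word \<alpha> i) \<in> {0, 1}"
    using char_word_eq_floor_diff[OF assms(1)] floor_add_diff_cases[of "(real i + 1) * \<alpha>" \<alpha>]
    by auto
  then show ?thesis
    by auto
qed

lemma sum_list_factor:
  assumes "0 \<le> \<alpha>"
  shows "int (sum_list (factor \<alpha> i m)) = \<lfloor>(real i + 1) * \<alpha> + real m * \<alpha>\<rfloor> - \<lfloor>(real i + 1) * \<alpha>\<rfloor>"
proof (induction m)
  case (Suc m)
  have "(real (i + m) + 2) * \<alpha> = (real i + 1) * \<alpha> + real (Suc m) * \<alpha>"
    and "(real (i + m) + 1) * \<alpha> = (real i + 1) * \<alpha> + real m * \<alpha>"
    by (simp_all add: algebra_simps)
  then show ?case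
    using Suc char_word_eq_floor_diff[OF assms, of "i + m"] by (simp add: factor_def)
qed (simp add: factor_def)

lemma word_hom_binary:
  assumes "set w \<subseteq> {0, 1}"
  shows "int (word_hom s0 s1 w) = int (length w) * int s0 + (int s1 - int s0) * int (sum_list w)"
  using assms by (induction w) (auto simp: word_hom_def algebra_simps)

lemma word_hom_factor:
  assumes "0 \<le> \<alpha>" and "\<alpha> < 1"
  shows "int (word_hom s0 s1 (factor \<alpha> i m))
    = int m * int s0 + (int s1 - int s0) * int (sum_list (factor \<alpha> i m))"
proof -
  have "set (factor \<alpha> i m) \<subseteq> {0, 1}"
    unfolding factor_def set_map by (intro image_subsetI char_word_binary[OF assms])
  then show ?thesis
    by (simp add: word_hom_binary factor_def)
qed

lemma sum_list_factor_range:
  assumes "\<alpha> \<notin> \<rat>" and "0 < \<alpha>"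
  shows "range (\<lambda>i. int (sum_list (factor \<alpha> i (Suc n))))
    = {\<lfloor>(real n + 1) * \<alpha>\<rfloor>, \<lfloor>(real n + 1) * \<alpha>\<rfloor> + 1}"
proof -
  let ?z = "(real n + 1) * \<alpha>"
  have ones: "int (sum_list (factor \<alpha> i (Suc n))) = \<lfloor>(real i + 1) * \<alpha> + ?z\<rfloor> - \<lfloor>(real i + 1) * \<alpha>\<rfloor>" for i
    using sum_list_factor[of \<alpha> i "Suc n"] assms(2) by (simp add: add.commute)
  \<comment> \<open>the starting positions \<open>k (n + 1)\<close> realise the progression \<open>\<alpha> + k ?z\<close>\<close>
  have progression: "int (sum_list (factor \<alpha> (k * Suc n) (Suc n)))
      = \<lfloor>\<alpha> + real (Suc k) * ?z\<rfloor> - \<lfloor>\<alpha> + real k * ?z\<rfloor>" for k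
  proof -
    have "(real (k * Suc n) + 1) * \<alpha> = \<alpha> + real k * ?z"
      by (simp add: algebra_simps)
    moreover have "\<alpha> + real (Suc k) * ?z = \<alpha> + real k * ?z + ?z"
      by (simp add: algebra_simps)
    ultimately show ?thesis
      by (simp add: ones add.assoc)
  qed
  have "?z \<notin> \<int>"
  proof
    assume "?z \<in> \<int>"
    then obtain q where "?z = of_int q"
      by (auto elim: Ints_cases)
    then have "\<alpha> = of_int q / (real n + 1)"
      by (simp add: field_simps)
    then show False
      using assms(1) by simp
  qed
  then obtain k1 where k1: "int (sum_list (factor \<alpha> (k1 * Suc n) (Suc n))) = \<lfloor>?z\<rfloor> + 1"
    unfolding progression by (metis floor_progression_step_eq_floor_plus_one)
  obtain k0 where k0: "int (sum_list (factor \<alpha> (k0 * Suc n) (Suc n))) = \<lfloor>?z\<rfloor>"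
    unfolding progression by (metis floor_progression_step_eq_floor)
  have "int (sum_list (factor \<alpha> i (Suc n))) \<in> {\<lfloor>?z\<rfloor>, \<lfloor>?z\<rfloor> + 1}" for i
    unfolding ones using floor_add_diff_cases by blast
  moreover have "\<lfloor>?z\<rfloor> \<in> range (\<lambda>i. int (sum_list (factor \<alpha> i (Suc n))))"
    unfolding k0[symmetric] by (rule rangeI)
  moreover have "\<lfloor>?z\<rfloor> + 1 \<in> range (\<lambda>i. int (sum_list (factor \<alpha> i (Suc n))))"
    unfolding k1[symmetric] by (rule rangeI)
  ultimately show ?thesis
    by blast
qed

theorem theorem3:
  fixes \<alpha> :: real and S0 S1 :: nat
  assumes "\<alpha> \<notin> \<rat>" and "0 < \<alpha>" and "\<alpha> < 1"
    and "S0 \<ge> 1" and "S1 \<ge> 1"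
  shows "(\<lambda>w. int (word_hom S0 S1 w)) ` sturmian_language \<alpha> =
           {(int S1 - int S0) * \<lfloor>(real n + 1) * \<alpha>\<rfloor> + int n * int S0 + int S0 | n :: nat. True}
         \<union> {(int S1 - int S0) * \<lfloor>(real n + 1) * \<alpha>\<rfloor> + int n * int S0 + int S1 | n :: nat. True}"
proof -
  let ?q = "\<lambda>n. \<lfloor>(real n + 1) * \<alpha>\<rfloor>"
  let ?ones = "\<lambda>i n. int (sum_list (factor \<alpha> i (Suc n)))"
  let ?value = "\<lambda>n d. int (Suc n) * int S0 + (int S1 - int S0) * d"
  have "(\<lambda>w. int (word_hom S0 S1 w)) ` sturmian_language \<alpha>
      = {int (word_hom S0 S1 (factor \<alpha> i (Suc n))) | i n. True}"
    unfolding sturmian_language_eq_factors by blast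
  also have "\<dots> = {?value n (?ones i n) | i n. True}"
    by (simp only: word_hom_factor[OF less_imp_le[OF assms(2)] assms(3)])
  also have "\<dots> = {?value n (?q n) | n. True} \<union> {?value n (?q n + 1) | n. True}"
    using sum_list_factor_range[OF assms(1,2)] by (simp add: set_eq_iff image_iff) metis
  also have "\<dots> = {(int S1 - int S0) * ?q n + int n * int S0 + int S0 | n. True}
      \<union> {(int S1 - int S0) * ?q n + int n * int S0 + int S1 | n. True}"
    by (simp add: algebra_simps)
  finally show ?thesis .
qed

end
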